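(* Every affine liner is $2$-balanced, i.e., all its lines have the same cardinality.
   Context: A liner is a set $X$ of points with a family of subsets called lines such that any two distinct points lie in a unique line and every line contains at least two points. For distinct $x,y$, $\overline{xy}$ is the line through them and $\overline{xx}:=\{x\}$. A liner $X$ is affine if for all $o,x,y\in X$ and $p\in\overline{xy}\setminus\overline{ox}$ there exists $u\in\overline{oy}$ such that for every $v\in\overline{oy}$: $u=v$ if and only if $\overline{vp}\cap\overline{ox}=\varnothing$. *)

theory Defs
  imports Main "HOL-Library.Equipollence"
begin

definition liner :: "'a set \<Rightarrow> 'a set set \<Rightarrow> bool" where
  "liner X L \<longleftrightarrow>
     (\<forall>l\<in>L. l \<subseteq> X \<and> (\<exists>a b. a \<in> l \<and> b \<in> l \<and> a \<noteq> b)) \<and>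
     (\<forall>x\<in>X. \<forall>y\<in>X. x \<noteq> y \<longrightarrow> (\<exists>!l. l \<in> L \<and> x \<in> l \<and> y \<in> l))"

definition line_through :: "'a set set \<Rightarrow> 'a \<Rightarrow> 'a \<Rightarrow> 'a set" where
  "line_through L x y = (if x = y then {x} else (THE l. l \<in> L \<and> x \<in> l \<and> y \<in> l))"

definition affine_liner :: "'a set \<Rightarrow> 'a set set \<Rightarrow> bool" where
  "affine_liner X L \<longleftrightarrow> liner X L \<and>
     (\<forall>c\<in>X. \<forall>x\<in>X. \<forall>y\<in>X. \<forall>p \<in> line_through L x y - line_through L c x.
        (\<exists>u\<in>line_through L c y. \<forall>v\<in>line_through L c y.
            (u = v \<longleftrightarrow> line_through L v p \<inter> line_through L c x = {})))"

end

theory Submission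
  imports Defs
begin

text \<open>Two lines through a common point \<open>c\<close> are equipollent: choosing \<open>x \<noteq> c\<close> on the first
and \<open>y \<noteq> c\<close> on the second, the affine axiom says that the parallel to \<open>xy\<close> through any
point \<open>a \<noteq> x\<close> of the first line meets the second in exactly one point, so projecting along the
direction \<open>xy\<close> (and sending \<open>x\<close> to \<open>y\<close>) is a bijection. Any two lines are joined by a third
line meeting both of them.\<close>

lemma affine_liner_imp_liner: "affine_liner X L \<Longrightarrow> liner X L"
  unfolding affine_liner_def by blast

lemma affine_linerE:
  assumes "affine_liner X L" "c \<in> X" "x \<in> X" "y \<in> X"
    and "p \<in> line_through L x y - line_through L c x"
  obtains u where "u \<in> line_through L c y"
    and "\<And>v. v \<in> line_through L c y \<Longrightarrow>
           u = v \<longleftrightarrow> line_through L v p \<inter> line_through L c x = {}"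
proof -
  have "\<forall>c\<in>X. \<forall>x\<in>X. \<forall>y\<in>X. \<forall>p \<in> line_through L x y - line_through L c x.
      \<exists>u\<in>line_through L c y. \<forall>v\<in>line_through L c y.
        u = v \<longleftrightarrow> line_through L v p \<inter> line_through L c x = {}"
    using assms(1) unfolding affine_liner_def by (rule conjunct2)
  then show ?thesis
    using that assms(2-5) by meson
qed

lemma line_through_commute: "line_through L a b = line_through L b a"
  unfolding line_through_def by (simp add: conj_commute)

lemma liner_line_subset: "liner X L \<Longrightarrow> l \<in> L \<Longrightarrow> l \<subseteq> X"
  unfolding liner_def by blast

lemma liner_line_other_point:
  assumes "liner X L" "l \<in> L"
  obtains b where "b \<in> l" "b \<noteq> a"
  using assms unfolding liner_def by metis

lemma liner_line_through:
  assumes "liner X L" "a \<in> X" "b \<in> X" "a \<noteq> b"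
  shows "line_through L a b \<in> L" "a \<in> line_through L a b" "b \<in> line_through L a b"
proof -
  have "\<exists>!l. l \<in> L \<and> a \<in> l \<and> b \<in> l"
    using assms unfolding liner_def by blast
  from theI'[OF this] show "line_through L a b \<in> L" "a \<in> line_through L a b" "b \<in> line_through L a b"
    using assms(4) unfolding line_through_def by simp_all
qed

lemma liner_line_through_eq:
  assumes "liner X L" "l \<in> L" "a \<in> l" "b \<in> l" "a \<noteq> b"
  shows "line_through L a b = l"
proof -
  have "\<exists>!l. l \<in> L \<and> a \<in> l \<and> b \<in> l"
    using assms liner_line_subset[OF assms(1,2)] unfolding liner_def by blast
  then have "(THE l. l \<in> L \<and> a \<in> l \<and> b \<in> l) = l"
    using assms by (intro the1_equality) auto
  then show ?thesis
    using assms(5) unfolding line_through_def by simp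
qed

lemma liner_lines_eq:
  assumes "liner X L" "l \<in> L" "l' \<in> L" "a \<in> l" "a \<in> l'" "b \<in> l" "b \<in> l'" "a \<noteq> b"
  shows "l = l'"
  using liner_line_through_eq[OF assms(1,2,4,6,8)] liner_line_through_eq[OF assms(1,3,5,7,8)]
  by simp

lemma liner_left_mem_line_through:
  assumes "liner X L" "a \<in> X" "b \<in> X"
  shows "a \<in> line_through L a b"
  using liner_line_through[OF assms] by (cases "a = b") (simp_all add: line_through_def)

lemma eqpoll_if_bijective_relation:
  assumes "\<And>a. a \<in> A \<Longrightarrow> \<exists>!b. b \<in> B \<and> R a b"
    and "\<And>b. b \<in> B \<Longrightarrow> \<exists>!a. a \<in> A \<and> R a b"
  shows "A \<approx> B"
proof (rule lepoll_antisym)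
  show "A \<lesssim> B"
    by (rule lepoll_relational_full[where R = "\<lambda>b a. R a b"]) (use assms in blast)+
  show "B \<lesssim> A"
    by (rule lepoll_relational_full[where R = R]) (use assms in blast)+
qed

text \<open>The pair \<open>(x, y)\<close> itself has to be added by hand, because the line \<open>xy\<close> is not disjoint
from itself.\<close>

definition parallel_corresp :: "'a set set \<Rightarrow> 'a \<Rightarrow> 'a \<Rightarrow> 'a \<Rightarrow> 'a \<Rightarrow> bool" where
  "parallel_corresp L x y a b \<longleftrightarrow>
     (a = x \<and> b = y) \<or> line_through L a b \<inter> line_through L x y = {}"

lemma parallel_corresp_commute: "parallel_corresp L x y a b = parallel_corresp L y x b a"
  unfolding parallel_corresp_def line_through_commute[of L b a] line_through_commute[of L y x]
  by blast

lemma affine_liner_parallel_corresp_unique: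
  assumes aff: "affine_liner X L"
    and lines: "l1 \<in> L" "l2 \<in> L" "l1 \<noteq> l2"
    and c: "c \<in> l1" "c \<in> l2" and x: "x \<in> l1" "x \<noteq> c" and y: "y \<in> l2" "y \<noteq> c"
    and a: "a \<in> l1"
  shows "\<exists>!b. b \<in> l2 \<and> parallel_corresp L x y a b"
proof -
  have lin: "liner X L"
    using aff by (rule affine_liner_imp_liner)
  have X: "c \<in> X" "x \<in> X" "y \<in> X" "a \<in> X"
    using liner_line_subset[OF lin] lines c x y a by blast+
  show ?thesis
  proof (cases "a = x")
    case True
    have "line_through L x b \<inter> line_through L x y \<noteq> {}" if "b \<in> l2" for b
    proof -
      have "b \<in> X"
        using liner_line_subset[OF lin lines(2)] that by blast
      then show ?thesis
        using liner_left_mem_line_through[OF lin X(2)] X(3) by blast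
    qed
    then show ?thesis
      using True y(1) unfolding parallel_corresp_def by blast
  next
    case False
    have l1: "line_through L x c = l1"
      using liner_line_through_eq[OF lin lines(1) x(1) c(1) x(2)] .
    have l2: "line_through L y c = l2"
      using liner_line_through_eq[OF lin lines(2) y(1) c(2) y(2)] .
    have xy: "x \<noteq> y"
      using liner_lines_eq[OF lin lines(1,2) c] lines(3) x(1,2) y(1) by blast
    note l3 = liner_line_through[OF lin X(2,3) xy]
    have "a \<notin> line_through L x y"
    proof
      assume "a \<in> line_through L x y"
      then have "line_through L x y = l1"
        using liner_lines_eq[OF lin l3(1) lines(1) l3(2) x(1) _ a] False by blast
      then show False
        using liner_lines_eq[OF lin lines(1,2) c _ y(1) y(2)[symmetric]] l3(3) lines(3) by blast
    qed
    then have "a \<in> line_through L x c - line_through L y x"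
      using a l1 line_through_commute[of L y x] by simp
    then obtain u where "u \<in> l2"
      and u: "\<And>v. v \<in> l2 \<Longrightarrow> u = v \<longleftrightarrow> line_through L v a \<inter> line_through L y x = {}"
      using affine_linerE[OF aff X(3,2,1)] l2 by metis
    moreover have "parallel_corresp L x y a v \<longleftrightarrow> line_through L v a \<inter> line_through L y x = {}" for v
      using False unfolding parallel_corresp_def line_through_commute[of L v a]
        line_through_commute[of L y x] by simp
    ultimately show ?thesis
      by blast
  qed
qed

lemma affine_liner_concurrent_lines_eqpoll:
  assumes aff: "affine_liner X L" and lines: "l1 \<in> L" "l2 \<in> L" and c: "c \<in> l1" "c \<in> l2"
  shows "l1 \<approx> l2"
proof (cases "l1 = l2")
  case False
  have lin: "liner X L"
    using aff by (rule affine_liner_imp_liner)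
  obtain x where x: "x \<in> l1" "x \<noteq> c"
    using liner_line_other_point[OF lin lines(1)] by blast
  obtain y where y: "y \<in> l2" "y \<noteq> c"
    using liner_line_other_point[OF lin lines(2)] by blast
  show ?thesis
  proof (rule eqpoll_if_bijective_relation)
    show "\<exists>!b. b \<in> l2 \<and> parallel_corresp L x y a b" if "a \<in> l1" for a
      using affine_liner_parallel_corresp_unique[OF aff lines False c x y that] .
    show "\<exists>!a. a \<in> l1 \<and> parallel_corresp L x y a b" if "b \<in> l2" for b
      using affine_liner_parallel_corresp_unique[OF aff lines(2,1) False[symmetric] c(2,1) y x that]
      unfolding parallel_corresp_commute[of L y x] .
  qed
qed simp

theorem theorem3p3p17:
  fixes X :: "'a set" and L :: "'a set set"
  assumes "affine_liner X L"
  shows "\<forall>l1\<in>L. \<forall>l2\<in>L. l1 \<approx> l2"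
proof (intro ballI)
  fix l1 l2 assume lines: "l1 \<in> L" "l2 \<in> L"
  have lin: "liner X L"
    using assms by (rule affine_liner_imp_liner)
  obtain c where c: "c \<in> l1"
    using liner_line_other_point[OF lin lines(1)] by blast
  obtain y where y: "y \<in> l2" "y \<noteq> c"
    using liner_line_other_point[OF lin lines(2)] by blast
  have "c \<in> X" "y \<in> X"
    using liner_line_subset[OF lin] lines c y by blast+
  note l = liner_line_through[OF lin this y(2)[symmetric]]
  have "l1 \<approx> line_through L c y"
    using affine_liner_concurrent_lines_eqpoll[OF assms lines(1) l(1) c l(2)] .
  also have "line_through L c y \<approx> l2"
    using affine_liner_concurrent_lines_eqpoll[OF assms l(1) lines(2) l(3) y(1)] .
  finally show "l1 \<approx> l2" .
qed

end
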